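(* Let $b_1,\ldots,b_q\in[n]$, $a_1,\ldots,a_q\in\mathbb{R}^m$, $K\in\{0,\ldots,\min\{m,n\}-1\}$, $\gamma>0$, and let $X^*$ be a d-stationary point of $$\min_{X\in\mathbb{R}^{m\times n}}\ \sum_{j\in[q]}\log\Big(1+\sum_{l\in[n]\setminus\{b_j\}}\exp(a_j^\top x_l-a_j^\top x_{b_j})\Big)+\gamma\mathcal{T}_K(X),$$ where $x_l$ is the $l$-th column of $X$. If $\gamma>\sqrt2\sum_{j\in[q]}\|a_j\|_2$, then $\mathcal{T}_K(X^* )=0$, i.e., $\mathrm{rank}(X^* )\le K$.
   Context: $\mathcal{T}_K(X)=\sum_{i=K+1}^{\min\{m,n\}}\sigma_i(X)$, with $\sigma_i(X)$ the $i$-th largest singular value. A point is d-stationary if the directional derivative of the objective there is $\ge0$ in every direction. *)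

theory Defs
  imports "Jordan_Normal_Form.Char_Poly" "Jordan_Normal_Form.DL_Rank"
begin

definition singular_values :: "real mat \<Rightarrow> real list" where
  "singular_values X =
     rev (sort (map sqrt (sorted_list_of_multiset (proots (char_poly (transpose_mat X * X))))))"

text \<open>sigma_i(X), 1-indexed as in the paper.\<close>
definition sigma :: "real mat \<Rightarrow> nat \<Rightarrow> real" where
  "sigma X i = singular_values X ! (i - 1)"

definition trunc_nuc :: "nat \<Rightarrow> real mat \<Rightarrow> real" where
  "trunc_nuc K X = (\<Sum>i = K + 1 .. min (dim_row X) (dim_col X). sigma X i)"

definition has_dir_deriv :: "(real mat \<Rightarrow> real) \<Rightarrow> real mat \<Rightarrow> real mat \<Rightarrow> real \<Rightarrow> bool" where
  "has_dir_deriv F X D L \<longleftrightarrow>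
     ((\<lambda>t. (F (X + t \<cdot>\<^sub>m D) - F X) / t) \<longlongrightarrow> L) (at_right 0)"

definition d_stationary :: "nat \<Rightarrow> nat \<Rightarrow> (real mat \<Rightarrow> real) \<Rightarrow> real mat \<Rightarrow> bool" where
  "d_stationary m n F X \<longleftrightarrow> X \<in> carrier_mat m n \<and>
     (\<forall>D \<in> carrier_mat m n. \<exists>L. has_dir_deriv F X D L \<and> L \<ge> 0)"

text \<open>The objective; indices are 0-based: columns l < n, samples j < q.\<close>
definition objective ::
  "nat \<Rightarrow> nat \<Rightarrow> (nat \<Rightarrow> nat) \<Rightarrow> (nat \<Rightarrow> real vec) \<Rightarrow> nat \<Rightarrow> real \<Rightarrow> real mat \<Rightarrow> real" where
  "objective n q b a K \<gamma> X =
     (\<Sum>j<q. ln (1 + (\<Sum>l \<in> {0..<n} - {b j}.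
          exp (a j \<bullet> col X l - a j \<bullet> col X (b j)))))
     + \<gamma> * trunc_nuc K X"

end

theory Submission
  imports Defs "Jordan_Normal_Form.Schur_Decomposition"
begin

text \<open>Diagonalise \<open>X\<^sup>T X = V diag(f) V\<^sup>T\<close> with \<open>V\<close> orthogonal and \<open>f\<close> nonincreasing, so that
  \<open>\<sigma>\<^sub>i(X) = \<surd>f\<^sub>i\<^sub>-\<^sub>1\<close>. Along the direction \<open>D\<close> that negates the trailing principal directions
  \<open>X V e\<^sub>i\<close> (\<open>i \<ge> K\<close>), the first \<open>K\<close> singular values of \<open>X + tD\<close> stay fixed and the others
  shrink by the factor \<open>1 - t\<close>, so \<open>\<T>\<^sub>K\<close> has directional derivative \<open>-\<T>\<^sub>K(X)\<close>.
  The loss term for sample \<open>j\<close> has directional derivative \<open>a\<^sub>j\<^sup>T D w\<close>, where \<open>w\<close> is the vector of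
  softmax weights minus their total at \<open>b\<^sub>j\<close>, so \<open>\<parallel>w\<parallel>\<^sup>2 \<le> 2\<close>; since \<open>\<parallel>D w\<parallel> \<le> \<sigma>\<^sub>K\<^sub>+\<^sub>1(X) \<parallel>w\<parallel>\<close>
  it is at most \<open>\<surd>2 \<parallel>a\<^sub>j\<parallel> \<sigma>\<^sub>K\<^sub>+\<^sub>1(X) \<le> \<surd>2 \<parallel>a\<^sub>j\<parallel> \<T>\<^sub>K(X)\<close>. D-stationarity therefore gives
  \<open>0 \<le> (\<surd>2 \<Sum>\<^sub>j \<parallel>a\<^sub>j\<parallel> - \<gamma>) \<T>\<^sub>K(X)\<close>, hence \<open>\<T>\<^sub>K(X) = 0\<close>; then \<open>X V e\<^sub>i = 0\<close> for \<open>i \<ge> K\<close>, and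
  \<open>X = \<Sum>\<^sub>i\<^sub><\<^sub>K (X V e\<^sub>i)(V e\<^sub>i)\<^sup>T\<close> has rank at most \<open>K\<close>.\<close>

section \<open>Real vectors and orthogonal matrices\<close>

lemma scalar_prod_self_nonneg: "0 \<le> v \<bullet> (v :: real vec)"
  using conjugate_square_ge_0_vec[of v] by simp

lemma scalar_prod_self_pos_iff:
  "v \<in> carrier_vec n \<Longrightarrow> 0 < v \<bullet> (v :: real vec) \<longleftrightarrow> v \<noteq> 0\<^sub>v n"
  using conjugate_square_greater_0_vec[of v n] by simp

lemma scalar_prod_le_sqrt_mult_sqrt:
  fixes u v :: "real vec"
  assumes u: "u \<in> carrier_vec k" and v: "v \<in> carrier_vec k"
  shows "u \<bullet> v \<le> sqrt (u \<bullet> u) * sqrt (v \<bullet> v)"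
proof (cases "v \<bullet> v = 0")
  case True
  then have "\<forall>i\<in>{0..<k}. v $ i * v $ i = 0"
    using v by (subst sum_nonneg_eq_0_iff[symmetric]) (auto simp: scalar_prod_def)
  then have "u \<bullet> v = 0" using u v by (simp add: scalar_prod_def)
  then show ?thesis using scalar_prod_self_nonneg[of u] scalar_prod_self_nonneg[of v] by simp
next
  case False
  define A B C where "A = u \<bullet> u" and "B = v \<bullet> v" and "C = u \<bullet> v"
  have B: "0 < B" using False scalar_prod_self_nonneg[of v] by (simp add: B_def)
  have expand: "(\<Sum>i\<in>I. (\<alpha> * x i - \<beta> * y i)\<^sup>2)
      = \<alpha>\<^sup>2 * (\<Sum>i\<in>I. x i * x i) - 2 * \<alpha> * \<beta> * (\<Sum>i\<in>I. x i * y i) + \<beta>\<^sup>2 * (\<Sum>i\<in>I. y i * y i)"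
    for \<alpha> \<beta> :: real and x y :: "nat \<Rightarrow> real" and I
    by (simp add: power2_eq_square algebra_simps sum_distrib_left sum.distrib sum_subtractf)
  have "0 \<le> (\<Sum>i\<in>{0..<k}. (B * u $ i - C * v $ i)\<^sup>2)" by (simp add: sum_nonneg)
  also have "\<dots> = B * (A * B - C\<^sup>2)"
    unfolding expand using u v by (simp add: A_def B_def C_def scalar_prod_def power2_eq_square algebra_simps)
  finally have "C\<^sup>2 \<le> A * B" using B by (simp add: zero_le_mult_iff)
  then have "\<bar>C\<bar> \<le> sqrt (A * B)" using real_sqrt_le_mono[of "C\<^sup>2"] by simp
  then show ?thesis by (simp add: A_def B_def C_def real_sqrt_mult)
qed

lemma scalar_prod_mult_mat_vec_cols:
  fixes a w :: "real vec" and D :: "real mat"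
  assumes a: "a \<in> carrier_vec m" and D: "D \<in> carrier_mat m n" and w: "w \<in> carrier_vec n"
  shows "a \<bullet> (D *\<^sub>v w) = (\<Sum>c<n. w $ c * (a \<bullet> col D c))"
proof -
  have "a \<bullet> (D *\<^sub>v w) = (\<Sum>r<m. \<Sum>c<n. w $ c * (a $ r * D $$ (r, c)))"
    using a D w by (simp add: scalar_prod_def lessThan_atLeast0 sum_distrib_left mult_ac)
  also have "\<dots> = (\<Sum>c<n. \<Sum>r<m. w $ c * (a $ r * D $$ (r, c)))" by (rule sum.swap)
  also have "\<dots> = (\<Sum>c<n. w $ c * (a \<bullet> col D c))"
    using a D by (auto simp: scalar_prod_def sum_distrib_left lessThan_atLeast0 intro!: sum.cong)
  finally show ?thesis .
qed

definition orthogonal_matrix :: "nat \<Rightarrow> 'a :: field mat \<Rightarrow> bool" where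
  "orthogonal_matrix n V \<longleftrightarrow> V \<in> carrier_mat n n \<and> transpose_mat V * V = 1\<^sub>m n"

lemma
  assumes "orthogonal_matrix n V"
  shows orthogonal_matrix_carrier: "V \<in> carrier_mat n n"
    and orthogonal_matrix_left_inverse: "transpose_mat V * V = 1\<^sub>m n"
    and orthogonal_matrix_right_inverse: "V * transpose_mat V = 1\<^sub>m n"
  using assms mat_mult_left_right_inverse[of "transpose_mat V" n V]
  unfolding orthogonal_matrix_def by auto

lemma orthogonal_matrix_mult:
  assumes Q: "orthogonal_matrix n Q" and W: "orthogonal_matrix n W"
  shows "orthogonal_matrix n (Q * W)"
proof -
  have Qc: "Q \<in> carrier_mat n n" and Wc: "W \<in> carrier_mat n n"
    using Q W by (auto dest: orthogonal_matrix_carrier)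
  have "transpose_mat (Q * W) * (Q * W) = transpose_mat W * (transpose_mat Q * Q) * W"
    using Qc Wc by (simp add: transpose_mult[of _ n n] assoc_mult_mat[of _ n n _ n _ n])
  then show ?thesis
    using Qc Wc orthogonal_matrix_left_inverse[OF Q] orthogonal_matrix_left_inverse[OF W]
    by (simp add: orthogonal_matrix_def)
qed

lemma orthogonal_matrix_col_scalar_prod:
  assumes "orthogonal_matrix n V" "i < n" "j < n"
  shows "col V i \<bullet> col V j = (if i = j then 1 else 0)"
proof -
  have "col V i \<bullet> col V j = (transpose_mat V * V) $$ (i, j)"
    using assms orthogonal_matrix_carrier[OF assms(1)] by simp
  then show ?thesis using assms orthogonal_matrix_left_inverse[OF assms(1)] by simp
qed

lemma scalar_prod_orthogonal_transpose_mult_vec: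
  assumes V: "orthogonal_matrix n V" and w: "w \<in> carrier_vec n"
  shows "(transpose_mat V *\<^sub>v w) \<bullet> (transpose_mat V *\<^sub>v w) = w \<bullet> w"
proof -
  have Vc: "V \<in> carrier_mat n n" using V by (rule orthogonal_matrix_carrier)
  have "(transpose_mat V *\<^sub>v w) \<bullet> (transpose_mat V *\<^sub>v w) = w \<bullet> ((V * transpose_mat V) *\<^sub>v w)"
    using transpose_vec_mult_scalar[OF Vc _ w, of "transpose_mat V *\<^sub>v w"] Vc w
    by (simp add: assoc_mult_mat_vec[of _ n n _ n])
  then show ?thesis using w by (simp add: orthogonal_matrix_right_inverse[OF V])
qed

lemma mult_conjugate_transpose:
  fixes Q W D :: "'a :: comm_ring_1 mat"
  assumes "Q \<in> carrier_mat n n" "W \<in> carrier_mat n n" "D \<in> carrier_mat n n"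
  shows "(Q * W) * D * transpose_mat (Q * W) = Q * (W * D * transpose_mat W) * transpose_mat Q"
  using assms by (simp add: transpose_mult[OF assms(1,2)] assoc_mult_mat[of _ n n _ n _ n])

lemma orthogonal_matrix_of_normalized_cols:
  fixes ws :: "real vec list"
  assumes ws: "set ws \<subseteq> carrier_vec n" "corthogonal ws" "length ws = n"
  shows "orthogonal_matrix n (mat_of_cols n (map (\<lambda>w. (1 / sqrt (w \<bullet> w)) \<cdot>\<^sub>v w) ws))"
    (is "orthogonal_matrix n ?Q")
proof -
  have wsc: "ws ! i \<in> carrier_vec n" if "i < n" for i using ws that by auto
  have orth: "ws ! i \<bullet> ws ! j = 0" if "i < n" "j < n" "i \<noteq> j" for i j
    using corthogonalD[OF ws(2), of i j] that ws(3) by auto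
  have pos: "ws ! i \<bullet> ws ! i > 0" if "i < n" for i
  proof -
    have "ws ! i \<bullet> ws ! i \<noteq> 0" using corthogonalD[OF ws(2), of i i] that ws(3) by auto
    then show ?thesis using scalar_prod_self_nonneg[of "ws ! i"] by linarith
  qed
  have Q: "?Q \<in> carrier_mat n n" using ws(3) by auto
  have "transpose_mat ?Q * ?Q = 1\<^sub>m n"
  proof (rule eq_matI)
    fix i j assume "i < dim_row (1\<^sub>m n :: real mat)" "j < dim_col (1\<^sub>m n :: real mat)"
    then have i: "i < n" and j: "j < n" by auto
    have "(transpose_mat ?Q * ?Q) $$ (i, j)
        = (1 / sqrt (ws ! i \<bullet> ws ! i)) * (1 / sqrt (ws ! j \<bullet> ws ! j)) * (ws ! i \<bullet> ws ! j)"
      using Q i j wsc[OF i] wsc[OF j] ws(3) by simp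
    also have "\<dots> = 1\<^sub>m n $$ (i, j)"
      using i j orth[OF i j] pos[OF i] by (cases "i = j") (simp_all add: power_divide)
    finally show "(transpose_mat ?Q * ?Q) $$ (i, j) = 1\<^sub>m n $$ (i, j)" .
  qed (use Q in auto)
  then show ?thesis using Q by (simp add: orthogonal_matrix_def)
qed

lemma orthogonal_matrix_first_col:
  fixes v :: "real vec"
  assumes v: "v \<in> carrier_vec n" and v1: "v \<bullet> v = 1"
  shows "\<exists>Q. orthogonal_matrix n Q \<and> col Q 0 = v"
proof -
  interpret cof_vec_space n "TYPE(real)" .
  have n: "n > 0" using v1 v by (cases n) (auto simp: scalar_prod_def)
  have v0: "v \<noteq> 0\<^sub>v n" using v1 v by auto
  define bs where "bs = basis_completion v"
  from basis_completion[OF v v0, folded bs_def]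
  have dist: "distinct bs" and indep: "\<not> lin_dep (set bs)" and bs: "set bs \<subseteq> carrier_vec n"
    and hd_bs: "hd bs = v" and len_bs: "length bs = n" by auto
  from hd_bs len_bs n obtain vs where bs_v: "bs = v # vs" by (cases bs) auto
  define ws where "ws = gram_schmidt n bs"
  from gram_schmidt_result[OF bs dist indep refl, folded ws_def]
  have ws: "set ws \<subseteq> carrier_vec n" "corthogonal ws" "length ws = n" by (auto simp: len_bs)
  have "hd ws = v" using gram_schmidt_hd[OF v, of vs] unfolding ws_def bs_v .
  then have "ws ! 0 = v" using n ws(3) by (cases ws) auto
  then have "col (mat_of_cols n (map (\<lambda>w. (1 / sqrt (w \<bullet> w)) \<cdot>\<^sub>v w) ws)) 0 = v"
    using n ws v v1 by simp
  then show ?thesis using orthogonal_matrix_of_normalized_cols[OF ws] by blast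
qed

section \<open>Diagonal matrices\<close>

lemma mat_diag_Suc_four_block:
  "mat_diag (Suc n) (case_nat e g) = four_block_mat (mat 1 1 (\<lambda>_. e)) (0\<^sub>m 1 n) (0\<^sub>m n 1) (mat_diag n g)"
  by (rule eq_matI) (auto simp: mat_diag_def split: nat.split)

lemma transpose_mat_diag [simp]: "transpose_mat (mat_diag n f) = mat_diag n f"
  by (rule eq_matI) (auto simp: mat_diag_def)

lemma mat_diag_mult_vec:
  assumes "v \<in> carrier_vec n"
  shows "mat_diag n f *\<^sub>v v = vec n (\<lambda>i. f i * v $ i)"
proof (rule eq_vecI)
  fix i assume "i < dim_vec (vec n (\<lambda>i. f i * v $ i))"
  then have i: "i < n" by simp
  have "(mat_diag n f *\<^sub>v v) $ i = (\<Sum>k\<in>{0..<n}. (if i = k then f k else 0) * v $ k)"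
    using i assms by (simp add: mat_diag_def scalar_prod_def)
  also have "\<dots> = (\<Sum>k\<in>{0..<n}. if k = i then f i * v $ i else 0)"
    by (rule sum.cong) auto
  finally show "(mat_diag n f *\<^sub>v v) $ i = vec n (\<lambda>i. f i * v $ i) $ i" using i by simp
qed (simp add: mat_diag_def)

lemma poly_prod_linear_eq_0_iff:
  "poly (\<Prod>i\<leftarrow>xs. [:- f i, 1:]) (x :: 'a :: idom) = 0 \<longleftrightarrow> (\<exists>i\<in>set xs. x = f i)"
  by (induction xs) auto

lemma proots_prod_linear:
  "proots (\<Prod>i\<leftarrow>xs. [:- f i, 1:]) = mset (map (f :: 'b \<Rightarrow> 'a :: idom) xs)"
proof (induction xs)
  case (Cons x xs)
  have "(\<Prod>i\<leftarrow>xs. [:- f i, 1:]) \<noteq> 0" by auto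
  then have "proots ([:- f x, 1:] * (\<Prod>i\<leftarrow>xs. [:- f i, 1:]))
      = proots [:- f x, 1:] + proots (\<Prod>i\<leftarrow>xs. [:- f i, 1:])"
    by (intro proots_mult) auto
  then show ?case using Cons by simp
qed simp

lemma char_poly_orthogonal_conjugate_diag:
  assumes V: "orthogonal_matrix n V"
  shows "char_poly (V * mat_diag n f * transpose_mat V) = (\<Prod>i\<leftarrow>[0..<n]. [:- f i, 1:])"
proof -
  have "similar_mat_wit (V * mat_diag n f * transpose_mat V) (mat_diag n f) V (transpose_mat V)"
    using orthogonal_matrix_carrier[OF V] orthogonal_matrix_left_inverse[OF V]
      orthogonal_matrix_right_inverse[OF V]
    by (auto simp: similar_mat_wit_def Let_def)
  then have "char_poly (V * mat_diag n f * transpose_mat V) = char_poly (mat_diag n f)"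
    by (intro char_poly_similar) (auto simp: similar_mat_def)
  also have "\<dots> = (\<Prod>a\<leftarrow>diag_mat (mat_diag n f). [:- a, 1:])"
    by (rule char_poly_upper_triangular[of _ n]) (auto simp: upper_triangular_def mat_diag_def)
  also have "diag_mat (mat_diag n f) = map f [0..<n]"
    by (simp add: diag_mat_def mat_diag_def)
  finally show ?thesis by (simp add: comp_def)
qed

section \<open>The spectral theorem for real symmetric matrices\<close>

lemma hermitian_form_of_real_symmetric_is_real:
  fixes A :: "real mat" and z :: "nat \<Rightarrow> complex"
  assumes A: "A \<in> carrier_mat n n" and sym: "transpose_mat A = A"
  shows "Im (\<Sum>i<n. \<Sum>j<n. complex_of_real (A $$ (i, j)) * (cnj (z i) * z j)) = 0"
proof -
  let ?s = "\<Sum>i<n. \<Sum>j<n. complex_of_real (A $$ (i, j)) * (cnj (z i) * z j)"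
  have A_sym: "A $$ (j, i) = A $$ (i, j)" if "i < n" "j < n" for i j
    using A that arg_cong[OF sym, of "\<lambda>M. M $$ (i, j)"] by simp
  have "cnj ?s = (\<Sum>i<n. \<Sum>j<n. complex_of_real (A $$ (i, j)) * (z i * cnj (z j)))"
    by (simp add: mult_ac)
  also have "\<dots> = (\<Sum>j<n. \<Sum>i<n. complex_of_real (A $$ (i, j)) * (z i * cnj (z j)))"
    by (rule sum.swap)
  also have "\<dots> = ?s" using A_sym by (auto simp: mult_ac intro!: sum.cong)
  finally have "cnj ?s = ?s" .
  then show ?thesis by (simp only: Reals_cnj_iff[symmetric] complex_is_Real_iff)
qed

lemma char_poly_real_symmetric_has_root:
  fixes A :: "real mat"
  assumes A: "A \<in> carrier_mat n n" and sym: "transpose_mat A = A" and n: "n > 0"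
  shows "\<exists>r. poly (char_poly A) r = 0"
proof -
  define B where "B = map_mat complex_of_real A"
  have B: "B \<in> carrier_mat n n" using A by (simp add: B_def)
  obtain as where cp: "char_poly B = (\<Prod>a\<leftarrow>as. [:- a, 1:])" and len: "length as = n"
    using char_poly_factorized[OF B] by blast
  obtain \<mu> rest where as: "as = \<mu> # rest" using len n by (cases as) auto
  have root: "poly (char_poly B) \<mu> = 0" by (simp add: cp as)
  then obtain z where "eigenvector B z \<mu>"
    using eigenvalue_root_char_poly[OF B] unfolding eigenvalue_def by blast
  then have z: "z \<in> carrier_vec n" and z0: "z \<noteq> 0\<^sub>v n" and Bz: "B *\<^sub>v z = \<mu> \<cdot>\<^sub>v z"
    using B by (auto simp: eigenvector_def)
  define N where "N = (\<Sum>i<n. (cmod (z $ i))\<^sup>2)"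
  have "(\<Sum>i<n. \<Sum>j<n. complex_of_real (A $$ (i, j)) * (cnj (z $ i) * z $ j))
      = (\<Sum>i<n. cnj (z $ i) * (B *\<^sub>v z) $ i)"
    using A z by (auto simp: B_def scalar_prod_def lessThan_atLeast0 sum_distrib_left mult_ac
        intro!: sum.cong)
  also have "\<dots> = (\<Sum>i<n. \<mu> * complex_of_real ((cmod (z $ i))\<^sup>2))"
  proof -
    have "cnj w * (\<mu> * w) = \<mu> * complex_of_real ((cmod w)\<^sup>2)" for w
      by (metis complex_norm_square mult.commute mult.left_commute)
    then show ?thesis using Bz z by (auto intro!: sum.cong)
  qed
  also have "\<dots> = \<mu> * complex_of_real N" by (simp add: N_def sum_distrib_left)
  finally have "Im (\<mu> * complex_of_real N) = 0"
    using hermitian_form_of_real_symmetric_is_real[OF A sym, of "\<lambda>i. z $ i"] by metis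
  moreover have "N > 0"
  proof -
    obtain i where i: "i < n" "z $ i \<noteq> 0" using z z0 by (metis carrier_vecD eq_vecI index_zero_vec)
    have "0 < (cmod (z $ i))\<^sup>2" using i by simp
    also have "\<dots> \<le> N" unfolding N_def by (rule member_le_sum) (use i in auto)
    finally show ?thesis .
  qed
  ultimately have "\<mu> = complex_of_real (Re \<mu>)" by (simp add: complex_eq_iff)
  then have "poly (char_poly B) \<mu> = complex_of_real (poly (char_poly A) (Re \<mu>))"
    unfolding B_def of_real_hom.char_poly_hom[OF A] by (metis of_real_hom.poly_map_poly)
  then show ?thesis using root by auto
qed

lemma transpose_conjugate_symmetric:
  fixes A Q :: "'a :: comm_ring_1 mat"
  assumes A: "A \<in> carrier_mat n n" and Q: "Q \<in> carrier_mat n n" and sym: "transpose_mat A = A"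
  shows "transpose_mat (transpose_mat Q * A * Q) = transpose_mat Q * A * Q"
proof -
  have QtA: "transpose_mat Q * A \<in> carrier_mat n n" using A Q by simp
  have "transpose_mat (transpose_mat Q * A * Q) = transpose_mat Q * transpose_mat (transpose_mat Q * A)"
    by (rule transpose_mult[OF QtA Q])
  also have "transpose_mat (transpose_mat Q * A) = A * Q"
    using transpose_mult[of "transpose_mat Q" n n A] A Q sym by simp
  finally show ?thesis using A Q by simp
qed

lemma symmetric_deflation:
  fixes A Q :: "'a :: field mat"
  assumes A: "A \<in> carrier_mat (Suc n) (Suc n)" and sym: "transpose_mat A = A"
    and Q: "orthogonal_matrix (Suc n) Q" and eig: "A *\<^sub>v col Q 0 = e \<cdot>\<^sub>v col Q 0"
  shows "\<exists>B \<in> carrier_mat n n. transpose_mat B = B \<and>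
    transpose_mat Q * A * Q = four_block_mat (mat 1 1 (\<lambda>_. e)) (0\<^sub>m 1 n) (0\<^sub>m n 1) B"
proof -
  define A' where "A' = transpose_mat Q * A * Q"
  have Qc: "Q \<in> carrier_mat (Suc n) (Suc n)" using Q by (rule orthogonal_matrix_carrier)
  have A'c: "A' \<in> carrier_mat (Suc n) (Suc n)" using A Qc by (simp add: A'_def)
  have sym': "transpose_mat A' = A'"
    unfolding A'_def by (rule transpose_conjugate_symmetric[OF A Qc sym])
  have col0: "A' $$ (i, 0) = (if i = 0 then e else 0)" if i: "i < Suc n" for i
  proof -
    have "A' $$ (i, 0) = col Q i \<bullet> (A *\<^sub>v col Q 0)"
      using A Qc i by (simp add: A'_def assoc_mult_mat[of _ "Suc n" "Suc n" _ "Suc n" _ "Suc n"]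
          col_mult2[of A _ _ Q] mult_mat_vec_def)
    also have "\<dots> = e * (col Q i \<bullet> col Q 0)" using Qc i by (simp add: eig)
    finally show ?thesis using orthogonal_matrix_col_scalar_prod[OF Q i, of 0] by simp
  qed
  have row0: "A' $$ (0, j) = (if j = 0 then e else 0)" if j: "j < Suc n" for j
    using col0[OF j] arg_cong[OF sym', of "\<lambda>M. M $$ (j, 0)"] A'c j by simp
  define B where "B = mat n n (\<lambda>(i, j). A' $$ (Suc i, Suc j))"
  have "A' $$ (j, i) = A' $$ (i, j)" if "i < Suc n" "j < Suc n" for i j
    using arg_cong[OF sym', of "\<lambda>M. M $$ (i, j)"] A'c that by simp
  then have "transpose_mat B = B" by (intro eq_matI) (auto simp: B_def)
  moreover have "A' = four_block_mat (mat 1 1 (\<lambda>_. e)) (0\<^sub>m 1 n) (0\<^sub>m n 1) B"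
  proof (rule eq_matI)
    fix i j assume "i < dim_row (four_block_mat (mat 1 1 (\<lambda>_. e)) (0\<^sub>m 1 n) (0\<^sub>m n 1) B)"
      "j < dim_col (four_block_mat (mat 1 1 (\<lambda>_. e)) (0\<^sub>m 1 n) (0\<^sub>m n 1) B)"
    then have i: "i < Suc n" and j: "j < Suc n" by (auto simp: B_def)
    show "A' $$ (i, j) = four_block_mat (mat 1 1 (\<lambda>_. e)) (0\<^sub>m 1 n) (0\<^sub>m n 1) B $$ (i, j)"
      using i j col0 row0 by (cases i; cases j) (auto simp: B_def)
  qed (use A'c in \<open>auto simp: B_def\<close>)
  ultimately show ?thesis unfolding A'_def B_def by auto
qed

lemma orthogonal_matrix_four_block:
  assumes V: "orthogonal_matrix n V"
  shows "orthogonal_matrix (Suc n) (four_block_mat (1\<^sub>m 1) (0\<^sub>m 1 n) (0\<^sub>m n 1) V)"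
proof -
  have Vc: "V \<in> carrier_mat n n" using V by (rule orthogonal_matrix_carrier)
  have "four_block_mat (1\<^sub>m 1) (0\<^sub>m 1 n) (0\<^sub>m n 1) V \<in> carrier_mat (1 + n) (1 + n)"
    using Vc by (intro four_block_carrier_mat) auto
  then show ?thesis
    using Vc orthogonal_matrix_left_inverse[OF V]
    by (simp add: orthogonal_matrix_def transpose_four_block_mat[of _ 1 1 _ n _ n]
        mult_four_block_mat[of _ 1 1 _ n _ n _ _ 1 _ n])
qed

lemma four_block_conjugate:
  fixes V E D :: "'a :: comm_ring_1 mat"
  assumes V: "V \<in> carrier_mat n n" and E: "E \<in> carrier_mat 1 1" and D: "D \<in> carrier_mat n n"
  defines "W \<equiv> four_block_mat (1\<^sub>m 1) (0\<^sub>m 1 n) (0\<^sub>m n 1) V"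
  shows "W * four_block_mat E (0\<^sub>m 1 n) (0\<^sub>m n 1) D * transpose_mat W
    = four_block_mat E (0\<^sub>m 1 n) (0\<^sub>m n 1) (V * D * transpose_mat V)"
proof -
  have VDV: "V * D * transpose_mat V \<in> carrier_mat n n" using V D by auto
  show ?thesis
    unfolding W_def using V E D left_add_zero_mat[OF VDV] left_mult_one_mat[OF E]
      right_mult_one_mat[OF E] right_add_zero_mat[OF E]
    by (simp add: transpose_four_block_mat[of _ 1 1 _ n _ n]
        mult_four_block_mat[of _ 1 1 _ n _ n _ _ 1 _ n])
qed

lemma eigenvector_first_col:
  fixes A :: "real mat"
  assumes A: "A \<in> carrier_mat n n" and e: "eigenvalue A e"
  shows "\<exists>Q. orthogonal_matrix n Q \<and> A *\<^sub>v col Q 0 = e \<cdot>\<^sub>v col Q 0"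
proof -
  obtain u where "eigenvector A u e" using find_eigenvector[OF A e] by blast
  then have u: "u \<in> carrier_vec n" and u0: "u \<noteq> 0\<^sub>v n" and Au: "A *\<^sub>v u = e \<cdot>\<^sub>v u"
    using A by (auto simp: eigenvector_def)
  have "0 < u \<bullet> u" using scalar_prod_self_pos_iff[OF u] u0 by simp
  then obtain Q where Q: "orthogonal_matrix n Q" and Q0: "col Q 0 = (1 / sqrt (u \<bullet> u)) \<cdot>\<^sub>v u"
    using orthogonal_matrix_first_col[of "(1 / sqrt (u \<bullet> u)) \<cdot>\<^sub>v u"] u
    by (auto simp: power_divide)
  moreover have "A *\<^sub>v col Q 0 = e \<cdot>\<^sub>v col Q 0"
    using A u Au by (simp add: Q0 mult_mat_vec smult_smult_assoc mult.commute)
  ultimately show ?thesis by blast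
qed

lemma orthogonal_conjugate_four_block_diag:
  fixes A :: "'a :: field mat"
  assumes A: "A \<in> carrier_mat (Suc n) (Suc n)" and Q: "orthogonal_matrix (Suc n) Q"
    and V: "orthogonal_matrix n V"
    and QAQ: "transpose_mat Q * A * Q
      = four_block_mat (mat 1 1 (\<lambda>_. e)) (0\<^sub>m 1 n) (0\<^sub>m n 1) (V * mat_diag n g * transpose_mat V)"
  shows "\<exists>U. orthogonal_matrix (Suc n) U \<and> A = U * mat_diag (Suc n) (case_nat e g) * transpose_mat U"
proof -
  define W where "W = four_block_mat (1\<^sub>m 1) (0\<^sub>m 1 n) (0\<^sub>m n 1) V"
  have W: "orthogonal_matrix (Suc n) W"
    unfolding W_def by (rule orthogonal_matrix_four_block[OF V])
  have Qc: "Q \<in> carrier_mat (Suc n) (Suc n)" using Q by (rule orthogonal_matrix_carrier)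
  have "W * mat_diag (Suc n) (case_nat e g) * transpose_mat W = transpose_mat Q * A * Q"
    unfolding W_def mat_diag_Suc_four_block QAQ
    by (rule four_block_conjugate[OF orthogonal_matrix_carrier[OF V]]) auto
  then have "Q * W * mat_diag (Suc n) (case_nat e g) * transpose_mat (Q * W)
      = Q * (transpose_mat Q * A * Q) * transpose_mat Q"
    using Qc orthogonal_matrix_carrier[OF W] by (simp add: mult_conjugate_transpose)
  also have "\<dots> = (Q * transpose_mat Q) * A * (Q * transpose_mat Q)"
    using A Qc by (simp add: assoc_mult_mat[of _ "Suc n" "Suc n" _ "Suc n" _ "Suc n"])
  also have "\<dots> = A" using A by (simp add: orthogonal_matrix_right_inverse[OF Q])
  finally show ?thesis using orthogonal_matrix_mult[OF Q W] by metis
qed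

text \<open>The largest eigenvalue \<open>e\<close> is split off first: every diagonal entry of the resulting
  decomposition is a root of the characteristic polynomial, hence at most \<open>e\<close>, so the
  entries come out nonincreasing.\<close>

theorem real_symmetric_spectral_sorted:
  fixes A :: "real mat"
  assumes "A \<in> carrier_mat n n" and "transpose_mat A = A"
  shows "\<exists>V f. orthogonal_matrix n V \<and> antimono_on {..<n} f \<and> A = V * mat_diag n f * transpose_mat V"
  using assms
proof (induction n arbitrary: A)
  case 0
  then have "A = 1\<^sub>m 0 * mat_diag 0 (\<lambda>_. 0) * transpose_mat (1\<^sub>m 0)" by (intro eq_matI) auto
  then show ?case
    by (intro exI[of _ "1\<^sub>m 0"] exI[of _ "\<lambda>_. 0"] conjI)
      (simp_all add: orthogonal_matrix_def monotone_on_def)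
next
  case (Suc n A)
  note A = Suc.prems(1) and sym = Suc.prems(2)
  define roots where "roots = {r. poly (char_poly A) r = 0}"
  have "char_poly A \<noteq> 0" using degree_monic_char_poly[OF A] by auto
  then have "finite roots" unfolding roots_def by (rule poly_roots_finite)
  moreover have "roots \<noteq> {}"
    using char_poly_real_symmetric_has_root[OF A sym] by (auto simp: roots_def)
  ultimately have e_root: "Max roots \<in> roots" and e_max: "\<And>r. r \<in> roots \<Longrightarrow> r \<le> Max roots"
    by auto
  define e where "e = Max roots"
  have "eigenvalue A e" using e_root eigenvalue_root_char_poly[OF A] by (simp add: roots_def e_def)
  then obtain Q where Q: "orthogonal_matrix (Suc n) Q" and "A *\<^sub>v col Q 0 = e \<cdot>\<^sub>v col Q 0"
    using eigenvector_first_col[OF A] by blast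
  then obtain B where B: "B \<in> carrier_mat n n" "transpose_mat B = B"
    and QAQ: "transpose_mat Q * A * Q = four_block_mat (mat 1 1 (\<lambda>_. e)) (0\<^sub>m 1 n) (0\<^sub>m n 1) B"
    using symmetric_deflation[OF A sym Q] by blast
  obtain V g where V: "orthogonal_matrix n V" and g: "antimono_on {..<n} g"
    and B_eq: "B = V * mat_diag n g * transpose_mat V"
    using Suc.IH[OF B] by blast
  define f where "f = case_nat e g"
  obtain U where U: "orthogonal_matrix (Suc n) U" and A_eq: "A = U * mat_diag (Suc n) f * transpose_mat U"
    using orthogonal_conjugate_four_block_diag[OF A Q V QAQ[unfolded B_eq]] unfolding f_def by blast
  have "f i \<in> roots" if "i < Suc n" for i
  proof -
    have "\<exists>j\<in>set [0..<Suc n]. f i = f j" using that by (intro bexI[of _ i]) auto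
    then show ?thesis
      unfolding roots_def A_eq char_poly_orthogonal_conjugate_diag[OF U] poly_prod_linear_eq_0_iff
      by blast
  qed
  then have "f i \<le> e" if "i < Suc n" for i using e_max that by (simp add: e_def)
  then have "antimono_on {..<Suc n} f"
    using g by (auto simp: monotone_on_def f_def split: nat.split)
  then show ?case using U A_eq by blast
qed

section \<open>Singular values and rank from a diagonalised Gram matrix\<close>

lemma singular_values_of_gram_diag:
  assumes V: "orthogonal_matrix n V"
    and gram: "transpose_mat Z * Z = V * mat_diag n h * transpose_mat V"
    and h: "antimono_on {..<n} h"
  shows "singular_values Z = map (\<lambda>i. sqrt (h i)) [0..<n]"
proof -
  define xs where "xs = map h [0..<n]"
  have roots: "proots (char_poly (transpose_mat Z * Z)) = mset xs"
    unfolding gram char_poly_orthogonal_conjugate_diag[OF V] xs_def by (rule proots_prod_linear)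
  have sorted: "sorted (rev xs)"
    using h by (auto simp: xs_def sorted_rev_iff_nth_mono rev_nth monotone_on_def)
  then have "sort xs = rev xs" by (intro properties_for_sort) auto
  moreover have "sorted (map sqrt (rev xs))"
    using sorted by (auto simp: sorted_map intro: sorted_wrt_mono_rel)
  ultimately show ?thesis
    unfolding singular_values_def roots sorted_list_of_multiset_mset
    by (simp add: sorted_sort_id xs_def rev_map)
qed

lemma trunc_nuc_of_gram_diag:
  assumes Z: "Z \<in> carrier_mat m n" and V: "orthogonal_matrix n V"
    and gram: "transpose_mat Z * Z = V * mat_diag n h * transpose_mat V"
    and h: "antimono_on {..<n} h"
  shows "trunc_nuc K Z = (\<Sum>i = K..<min m n. sqrt (h i))"
proof -
  have "trunc_nuc K Z = (\<Sum>i = Suc K..<Suc (min m n). sigma Z i)"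
    using Z by (simp add: trunc_nuc_def atLeastLessThanSuc_atLeastAtMost)
  also have "\<dots> = (\<Sum>i = K..<min m n. sigma Z (Suc i))"
    by (rule sum.shift_bounds_Suc_ivl)
  also have "\<dots> = (\<Sum>i = K..<min m n. sqrt (h i))"
    by (intro sum.cong) (auto simp: sigma_def singular_values_of_gram_diag[OF V gram h])
  finally show ?thesis .
qed

lemma rank_sum_outer_products_le:
  "vec_space.rank m (mat m n (\<lambda>(r, c). \<Sum>k<d. g k r * h k c) :: real mat) \<le> d"
proof (induction d)
  case 0
  have "mat m n (\<lambda>(r, c). \<Sum>k<0. g k r * h k c) = (0\<^sub>m m n :: real mat)" by (rule eq_matI) auto
  then show ?case by (simp only: vec_space.rank_0I)
next
  case (Suc d)
  have split: "mat m n (\<lambda>(r, c). \<Sum>k<Suc d. g k r * h k c)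
      = mat m n (\<lambda>(r, c). \<Sum>k<d. g k r * h k c) + (mat m n (\<lambda>(r, c). g d r * h d c) :: real mat)"
    by (rule eq_matI) auto
  have "vec_space.rank m (mat m n (\<lambda>(r, c). g d r * h d c) :: real mat) \<le> 1"
    by (rule vec_space.rank_le_1_product_entries[where f = "g d" and g = "h d" and nc = n]) auto
  moreover have "vec_space.rank m (mat m n (\<lambda>(r, c). \<Sum>k<Suc d. g k r * h k c) :: real mat)
     \<le> vec_space.rank m (mat m n (\<lambda>(r, c). \<Sum>k<d. g k r * h k c) :: real mat)
       + vec_space.rank m (mat m n (\<lambda>(r, c). g d r * h d c) :: real mat)"
    unfolding split by (rule vec_space.rank_subadditive[of _ m n]) auto
  ultimately show ?case using Suc.IH by linarith
qed

locale gram_diagonalization =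
  fixes X V :: "real mat" and f :: "nat \<Rightarrow> real" and m n :: nat
  assumes carrier_X: "X \<in> carrier_mat m n"
    and orthogonal_V: "orthogonal_matrix n V"
    and gram_X: "transpose_mat X * X = V * mat_diag n f * transpose_mat V"
    and antimono_f: "antimono_on {..<n} f"
begin

lemma carrier_V: "V \<in> carrier_mat n n"
  using orthogonal_V by (rule orthogonal_matrix_carrier)

lemma carrier_XV: "X * V \<in> carrier_mat m n"
  using carrier_X carrier_V by simp

lemma gram_XV: "transpose_mat (X * V) * (X * V) = mat_diag n f"
proof -
  have Vt: "transpose_mat V \<in> carrier_mat n n" and Xt: "transpose_mat X \<in> carrier_mat n m"
    using carrier_V carrier_X by auto
  have VfV: "V * mat_diag n f \<in> carrier_mat n n" using carrier_V by simp
  have "transpose_mat (X * V) * (X * V) = transpose_mat V * ((transpose_mat X * X) * V)"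
    using carrier_X carrier_V Vt Xt
    by (simp add: transpose_mult[OF carrier_X carrier_V] assoc_mult_mat[of _ n n _ m _ n]
        assoc_mult_mat[of _ n m _ n _ n])
  also have "(transpose_mat X * X) * V = (V * mat_diag n f) * (transpose_mat V * V)"
    unfolding gram_X using VfV Vt carrier_V by (rule assoc_mult_mat)
  also have "\<dots> = V * mat_diag n f"
    using right_mult_one_mat[OF VfV] by (simp add: orthogonal_matrix_left_inverse[OF orthogonal_V])
  also have "transpose_mat V * (V * mat_diag n f) = (transpose_mat V * V) * mat_diag n f"
    using Vt carrier_V by (simp add: assoc_mult_mat[of _ n n _ n _ n])
  finally show ?thesis
    using left_mult_one_mat[OF mat_diag_dim] by (simp add: orthogonal_matrix_left_inverse[OF orthogonal_V])
qed

lemma eigenvalue_nonneg: "i < n \<Longrightarrow> 0 \<le> f i"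
proof -
  assume i: "i < n"
  have "f i = col (X * V) i \<bullet> col (X * V) i"
    using arg_cong[OF gram_XV, of "\<lambda>M. M $$ (i, i)"] carrier_X carrier_V i
    by (simp add: mat_diag_def)
  then show ?thesis using scalar_prod_self_nonneg by simp
qed

definition principal_rescaling :: "(nat \<Rightarrow> real) \<Rightarrow> real mat" where
  "principal_rescaling h = X * V * mat_diag n h * transpose_mat V"

lemma principal_rescaling_carrier: "principal_rescaling h \<in> carrier_mat m n"
  using carrier_matD[OF carrier_X] carrier_matD[OF carrier_V]
  by (intro carrier_matI) (simp_all add: principal_rescaling_def)

lemma principal_rescaling_dim [simp]:
  "dim_row (principal_rescaling h) = m" "dim_col (principal_rescaling h) = n"
  using principal_rescaling_carrier by auto

lemma principal_rescaling_index:
  assumes "r < m" "c < n"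
  shows "principal_rescaling h $$ (r, c) = (\<Sum>k<n. (X * V) $$ (r, k) * h k * V $$ (c, k))"
  using assms carrier_XV carrier_V
  by (simp add: principal_rescaling_def mat_diag_mult_right[OF carrier_XV] scalar_prod_def
      lessThan_atLeast0)

lemma principal_rescaling_one: "principal_rescaling (\<lambda>_. 1) = X"
proof -
  have "principal_rescaling (\<lambda>_. 1) = X * (V * transpose_mat V)"
    using carrier_X carrier_V carrier_XV
    by (simp add: principal_rescaling_def assoc_mult_mat[of _ m n _ n _ n])
  then show ?thesis using carrier_X by (simp add: orthogonal_matrix_right_inverse[OF orthogonal_V])
qed

lemma principal_rescaling_add_smult:
  "principal_rescaling g + t \<cdot>\<^sub>m principal_rescaling h = principal_rescaling (\<lambda>i. g i + t * h i)"
proof (rule eq_matI)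
  fix r c assume "r < dim_row (principal_rescaling (\<lambda>i. g i + t * h i))"
    "c < dim_col (principal_rescaling (\<lambda>i. g i + t * h i))"
  then have r: "r < m" and c: "c < n" by auto
  show "(principal_rescaling g + t \<cdot>\<^sub>m principal_rescaling h) $$ (r, c)
      = principal_rescaling (\<lambda>i. g i + t * h i) $$ (r, c)"
    using r c principal_rescaling_carrier[of g] principal_rescaling_carrier[of h]
    by (simp add: principal_rescaling_index sum_distrib_left algebra_simps sum.distrib)
qed auto

lemma gram_principal_rescaling:
  "transpose_mat (principal_rescaling h) * principal_rescaling h
    = V * mat_diag n (\<lambda>i. (h i)\<^sup>2 * f i) * transpose_mat V"
proof -
  define Y H where "Y = X * V" and "H = mat_diag n h"
  have Y: "Y \<in> carrier_mat m n" and H: "H \<in> carrier_mat n n"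
    and Yt: "transpose_mat Y \<in> carrier_mat n m" and Vt: "transpose_mat V \<in> carrier_mat n n"
    using carrier_XV carrier_V by (auto simp: Y_def H_def)
  have YH: "Y * H \<in> carrier_mat m n" and HYt: "H * transpose_mat Y \<in> carrier_mat n m"
    using Y H Yt by auto
  have "transpose_mat (Y * H * transpose_mat V) = V * transpose_mat (Y * H)"
    using transpose_mult[OF YH Vt] by simp
  also have "transpose_mat (Y * H) = H * transpose_mat Y"
    using transpose_mult[OF Y H] by (simp add: H_def)
  finally have "transpose_mat (Y * H * transpose_mat V) * (Y * H * transpose_mat V)
      = V * ((H * transpose_mat Y) * ((Y * H) * transpose_mat V))"
    using assoc_mult_mat[OF carrier_V HYt, of _ n] YH Vt by simp
  also have "(H * transpose_mat Y) * ((Y * H) * transpose_mat V)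
      = (H * ((transpose_mat Y * Y) * H)) * transpose_mat V"
    using H Y Yt Vt YH HYt
    by (simp add: assoc_mult_mat[of _ n m _ n _ n] assoc_mult_mat[of _ n n _ n _ n]
        assoc_mult_mat[of _ n m _ m _ n] assoc_mult_mat[of _ n n _ m _ n])
  also have "H * ((transpose_mat Y * Y) * H) = mat_diag n (\<lambda>i. (h i)\<^sup>2 * f i)"
    by (simp add: Y_def H_def gram_XV power2_eq_square mult_ac)
  finally show ?thesis
    using carrier_V Vt by (simp add: principal_rescaling_def Y_def H_def assoc_mult_mat[of _ n n _ n _ n])
qed

lemma scalar_prod_principal_rescaling_le:
  assumes bound: "\<And>i. i < n \<Longrightarrow> (h i)\<^sup>2 * f i \<le> F" and w: "w \<in> carrier_vec n"
  shows "(principal_rescaling h *\<^sub>v w) \<bullet> (principal_rescaling h *\<^sub>v w) \<le> F * (w \<bullet> w)"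
proof -
  define Y where "Y = X * V"
  have Y: "Y \<in> carrier_mat m n" and Vt: "transpose_mat V \<in> carrier_mat n n"
    using carrier_XV carrier_V by (auto simp: Y_def)
  define u where "u = transpose_mat V *\<^sub>v w"
  have u: "u \<in> carrier_vec n" using Vt w by (simp add: u_def)
  define z where "z = mat_diag n h *\<^sub>v u"
  have z: "z \<in> carrier_vec n" using mult_mat_vec_carrier[OF mat_diag_dim u] by (simp add: z_def)
  have "principal_rescaling h *\<^sub>v w = Y *\<^sub>v z"
    using Y Vt w by (simp add: principal_rescaling_def Y_def[symmetric] z_def u_def
        assoc_mult_mat_vec[of _ m n _ n])
  then have "(principal_rescaling h *\<^sub>v w) \<bullet> (principal_rescaling h *\<^sub>v w)
      = (transpose_mat Y *\<^sub>v (Y *\<^sub>v z)) \<bullet> z"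
    using transpose_vec_mult_scalar[OF Y z, of "Y *\<^sub>v z"] Y z by simp
  also have "transpose_mat Y *\<^sub>v (Y *\<^sub>v z) = mat_diag n f *\<^sub>v z"
    using Y z by (simp add: Y_def gram_XV flip: assoc_mult_mat_vec[of _ n m _ n])
  also have "(mat_diag n f *\<^sub>v z) \<bullet> z = (\<Sum>i<n. (h i)\<^sup>2 * f i * (u $ i)\<^sup>2)"
    using z u by (simp add: mat_diag_mult_vec z_def scalar_prod_def lessThan_atLeast0
        power2_eq_square mult_ac)
  also have "\<dots> \<le> (\<Sum>i<n. F * (u $ i)\<^sup>2)"
    by (intro sum_mono mult_right_mono bound) auto
  also have "\<dots> = F * (u \<bullet> u)"
    using u by (simp add: scalar_prod_def sum_distrib_left power2_eq_square lessThan_atLeast0)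
  also have "u \<bullet> u = w \<bullet> w"
    unfolding u_def by (rule scalar_prod_orthogonal_transpose_mult_vec[OF orthogonal_V w])
  finally show ?thesis .
qed

lemma XV_index_eq_0_if_eigenvalue_0:
  assumes "r < m" "i < n" "f i = 0"
  shows "(X * V) $$ (r, i) = 0"
proof -
  have "(\<Sum>k\<in>{0..<m}. (X * V) $$ (k, i) * (X * V) $$ (k, i)) = col (X * V) i \<bullet> col (X * V) i"
    using carrier_X carrier_V assms by (simp add: scalar_prod_def)
  also have "\<dots> = 0"
    using arg_cong[OF gram_XV, of "\<lambda>M. M $$ (i, i)"] carrier_X carrier_V assms
    by (simp add: mat_diag_def)
  finally show ?thesis using assms by (subst (asm) sum_nonneg_eq_0_iff) auto
qed

lemma rank_le_if_eigenvalue_0: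
  assumes K: "K < n" and zero: "f K = 0"
  shows "vec_space.rank m X \<le> K"
proof -
  define Y where "Y = X * V"
  have Y_zero: "Y $$ (r, i) = 0" if "r < m" "K \<le> i" "i < n" for r i
  proof -
    have "f i \<le> f K" using antimono_f that K by (simp add: monotone_on_def)
    then show ?thesis
      using XV_index_eq_0_if_eigenvalue_0 eigenvalue_nonneg[of i] zero that by (simp add: Y_def)
  qed
  have "X = mat m n (\<lambda>(r, c). \<Sum>k<K. Y $$ (r, k) * V $$ (c, k))"
  proof (rule eq_matI)
    fix r c assume "r < dim_row (mat m n (\<lambda>(r, c). \<Sum>k<K. Y $$ (r, k) * V $$ (c, k)))"
      "c < dim_col (mat m n (\<lambda>(r, c). \<Sum>k<K. Y $$ (r, k) * V $$ (c, k)))"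
    then have r: "r < m" and c: "c < n" by auto
    have "X $$ (r, c) = (\<Sum>k<n. Y $$ (r, k) * V $$ (c, k))"
      using principal_rescaling_index[OF r c, of "\<lambda>_. 1"] by (simp add: principal_rescaling_one Y_def)
    also have "\<dots> = (\<Sum>k<K. Y $$ (r, k) * V $$ (c, k)) + (\<Sum>k = K..<n. Y $$ (r, k) * V $$ (c, k))"
      using K sum.atLeastLessThan_concat[of 0 K n "\<lambda>k. Y $$ (r, k) * V $$ (c, k)", symmetric]
      by (simp add: lessThan_atLeast0)
    also have "(\<Sum>k = K..<n. Y $$ (r, k) * V $$ (c, k)) = 0" using Y_zero r by simp
    finally show "X $$ (r, c) = mat m n (\<lambda>(r, c). \<Sum>k<K. Y $$ (r, k) * V $$ (c, k)) $$ (r, c)"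
      using r c by simp
  qed (use carrier_X in auto)
  then show ?thesis
    using rank_sum_outer_products_le[of m n "\<lambda>k r. Y $$ (r, k)" "\<lambda>k c. V $$ (c, k)" K] by simp
qed

definition tail_direction :: "nat \<Rightarrow> real mat" where
  "tail_direction K = principal_rescaling (\<lambda>i. if i < K then 0 else -1)"

lemma tail_direction_carrier: "tail_direction K \<in> carrier_mat m n"
  by (simp add: tail_direction_def principal_rescaling_carrier)

lemma add_smult_tail_direction:
  "X + t \<cdot>\<^sub>m tail_direction K = principal_rescaling (\<lambda>i. if i < K then 1 else 1 - t)"
proof -
  have "(\<lambda>i. 1 + t * (if i < K then 0 else -1)) = (\<lambda>i. if i < K then 1 else 1 - t)"
    by auto
  then show ?thesis
    using principal_rescaling_add_smult[of "\<lambda>_. 1" t "\<lambda>i. if i < K then 0 else -1"]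
    by (simp add: tail_direction_def principal_rescaling_one)
qed

lemma trunc_nuc_eq_sum_sqrt: "trunc_nuc K X = (\<Sum>i = K..<min m n. sqrt (f i))"
  by (rule trunc_nuc_of_gram_diag[OF carrier_X orthogonal_V gram_X antimono_f])

lemma trunc_nuc_nonneg: "0 \<le> trunc_nuc K X"
  using eigenvalue_nonneg by (auto simp: trunc_nuc_eq_sum_sqrt intro!: sum_nonneg)

lemma sqrt_eigenvalue_le_trunc_nuc:
  assumes "K < min m n"
  shows "sqrt (f K) \<le> trunc_nuc K X"
  unfolding trunc_nuc_eq_sum_sqrt using assms eigenvalue_nonneg by (intro member_le_sum) auto

lemma trunc_nuc_along_tail_direction:
  assumes t: "0 \<le> t" "t \<le> 1"
  shows "trunc_nuc K (X + t \<cdot>\<^sub>m tail_direction K) = (1 - t) * trunc_nuc K X"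
proof -
  define c where "c i = (if i < K then 1 else 1 - t)" for i
  have "antimono_on {..<n} (\<lambda>i. (c i)\<^sup>2 * f i)"
  proof (rule monotone_onI)
    fix i j assume ij: "i \<in> {..<n}" "j \<in> {..<n}" "i \<le> j"
    have "(c j)\<^sup>2 \<le> (c i)\<^sup>2"
      using t ij by (auto simp: c_def power_le_one)
    moreover have "f j \<le> f i" using antimono_f ij by (auto simp: monotone_on_def)
    ultimately show "(c j)\<^sup>2 * f j \<le> (c i)\<^sup>2 * f i"
      using eigenvalue_nonneg[of j] ij by (intro mult_mono) auto
  qed
  then have "trunc_nuc K (X + t \<cdot>\<^sub>m tail_direction K) = (\<Sum>i = K..<min m n. sqrt ((c i)\<^sup>2 * f i))"
    unfolding add_smult_tail_direction c_def[symmetric]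
    by (rule trunc_nuc_of_gram_diag[OF principal_rescaling_carrier orthogonal_V gram_principal_rescaling])
  also have "\<dots> = (\<Sum>i = K..<min m n. (1 - t) * sqrt (f i))"
    using t by (intro sum.cong) (auto simp: c_def real_sqrt_mult)
  finally show ?thesis by (simp add: trunc_nuc_eq_sum_sqrt sum_distrib_left)
qed

lemma scalar_prod_tail_direction_le:
  assumes "K < n" "w \<in> carrier_vec n"
  shows "(tail_direction K *\<^sub>v w) \<bullet> (tail_direction K *\<^sub>v w) \<le> f K * (w \<bullet> w)"
  unfolding tail_direction_def
  by (rule scalar_prod_principal_rescaling_le)
    (use assms antimono_f eigenvalue_nonneg in \<open>auto simp: monotone_on_def\<close>)

lemma has_dir_deriv_trunc_nuc_tail_direction:
  "has_dir_deriv (\<lambda>Y. \<gamma> * trunc_nuc K Y) X (tail_direction K) (- (\<gamma> * trunc_nuc K X))"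
  unfolding has_dir_deriv_def
proof (rule tendsto_cong[THEN iffD1, OF _ tendsto_const])
  have "\<forall>\<^sub>F t in at_right 0. t \<in> {0<..<(1::real)}"
    using eventually_at_right_real[of 0 1] by simp
  then show "\<forall>\<^sub>F t in at_right 0. - (\<gamma> * trunc_nuc K X)
      = (\<gamma> * trunc_nuc K (X + t \<cdot>\<^sub>m tail_direction K) - \<gamma> * trunc_nuc K X) / t"
    by eventually_elim (auto simp: trunc_nuc_along_tail_direction field_simps)
qed

end

lemma gram_diagonalization_exists:
  assumes "X \<in> carrier_mat m n"
  shows "\<exists>V f. gram_diagonalization X V f m n"
proof -
  have "transpose_mat (transpose_mat X * X) = transpose_mat X * X"
    using assms by (simp add: transpose_mult[of _ n m])
  then show ?thesis
    using real_symmetric_spectral_sorted[of "transpose_mat X * X" n] assms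
    by (auto simp: gram_diagonalization_def)
qed

section \<open>Directional derivatives\<close>

lemma has_dir_deriv_add:
  assumes "has_dir_deriv F X D L" and "has_dir_deriv G X D M"
  shows "has_dir_deriv (\<lambda>Y. F Y + G Y) X D (L + M)"
proof -
  have "(\<lambda>t. (F (X + t \<cdot>\<^sub>m D) + G (X + t \<cdot>\<^sub>m D) - (F X + G X)) / t)
      = (\<lambda>t. (F (X + t \<cdot>\<^sub>m D) - F X) / t + (G (X + t \<cdot>\<^sub>m D) - G X) / t)"
    by (simp add: fun_eq_iff add_divide_distrib[symmetric])
  then show ?thesis
    using tendsto_add[OF assms[unfolded has_dir_deriv_def]] by (simp add: has_dir_deriv_def)
qed

lemma has_dir_deriv_unique:
  assumes "has_dir_deriv F X D L" and "has_dir_deriv F X D M"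
  shows "L = M"
  using tendsto_unique[OF trivial_limit_at_right_real assms[unfolded has_dir_deriv_def]] .

lemma has_dir_deriv_of_real_derivative:
  assumes D: "D \<in> carrier_mat (dim_row X) (dim_col X)"
    and deriv: "((\<lambda>t. F (X + t \<cdot>\<^sub>m D)) has_real_derivative L) (at 0)"
  shows "has_dir_deriv F X D L"
proof -
  have "X + 0 \<cdot>\<^sub>m D = X" using D by (intro eq_matI) auto
  then have "((\<lambda>t. (F (X + t \<cdot>\<^sub>m D) - F X) / t) \<longlongrightarrow> L) (at 0)"
    using deriv unfolding has_field_derivative_iff by simp
  then show ?thesis
    unfolding has_dir_deriv_def by (rule tendsto_mono[OF at_le, rotated]) simp
qed

section \<open>The multinomial logistic loss\<close>

definition multinomial_logistic_loss ::
  "nat \<Rightarrow> nat \<Rightarrow> (nat \<Rightarrow> nat) \<Rightarrow> (nat \<Rightarrow> real vec) \<Rightarrow> real mat \<Rightarrow> real" where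
  "multinomial_logistic_loss n q b a X =
     (\<Sum>j<q. ln (1 + (\<Sum>l \<in> {0..<n} - {b j}. exp (a j \<bullet> col X l - a j \<bullet> col X (b j)))))"

lemma objective_eq:
  "objective n q b a K \<gamma> = (\<lambda>X. multinomial_logistic_loss n q b a X + \<gamma> * trunc_nuc K X)"
  by (simp add: fun_eq_iff objective_def multinomial_logistic_loss_def)

definition weights_minus_total :: "nat \<Rightarrow> nat set \<Rightarrow> nat \<Rightarrow> (nat \<Rightarrow> real) \<Rightarrow> real vec" where
  "weights_minus_total n S b p = vec n (\<lambda>c. (if c \<in> S then p c else 0) - (if c = b then sum p S else 0))"

lemma weights_minus_total_scalar_prod_le:
  assumes S: "S \<subseteq> {..<n}" "b \<notin> S" and b: "b < n"
    and p: "\<And>l. l \<in> S \<Longrightarrow> 0 \<le> p l" "sum p S \<le> 1"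
  shows "weights_minus_total n S b p \<bullet> weights_minus_total n S b p \<le> 2"
proof -
  define w P where "w = weights_minus_total n S b p" and "P = sum p S"
  have fin: "finite S" using S(1) finite_subset by blast
  have "w \<bullet> w = (\<Sum>c<n. w $ c * w $ c)"
    by (simp add: w_def weights_minus_total_def scalar_prod_def lessThan_atLeast0)
  also have "\<dots> = (\<Sum>c<n. (if c \<in> S then (p c)\<^sup>2 else 0) + (if c = b then P\<^sup>2 else 0))"
    using S(2) by (intro sum.cong) (auto simp: w_def P_def weights_minus_total_def power2_eq_square)
  also have "\<dots> = (\<Sum>c\<in>S. (p c)\<^sup>2) + P\<^sup>2"
    using b S(1) sum.inter_restrict[where A = "{..<n}" and B = S and g = "\<lambda>c. (p c)\<^sup>2"]
    by (simp add: sum.distrib Int_absorb1)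
  finally have ww: "w \<bullet> w = (\<Sum>c\<in>S. (p c)\<^sup>2) + P\<^sup>2" .
  have "(\<Sum>c\<in>S. (p c)\<^sup>2) \<le> P"
    unfolding P_def
  proof (rule sum_mono)
    fix c assume c: "c \<in> S"
    have "p c \<le> 1" using member_le_sum[of c S p] c fin p by auto
    then show "(p c)\<^sup>2 \<le> p c" using p(1)[OF c] by (simp add: power2_eq_square mult_left_le)
  qed
  moreover have "P\<^sup>2 \<le> 1" using p sum_nonneg[of S p] by (simp add: P_def power_le_one)
  ultimately show ?thesis using ww p(2) by (simp add: w_def P_def)
qed

lemma weighted_column_difference_le:
  fixes a :: "real vec" and D :: "real mat" and p :: "nat \<Rightarrow> real"
  assumes a: "a \<in> carrier_vec m" and D: "D \<in> carrier_mat m n" and b: "b < n"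
    and S: "S \<subseteq> {..<n}" "b \<notin> S" and p: "\<And>l. l \<in> S \<Longrightarrow> 0 \<le> p l" "sum p S \<le> 1"
    and bound: "\<And>w. w \<in> carrier_vec n \<Longrightarrow> (D *\<^sub>v w) \<bullet> (D *\<^sub>v w) \<le> F * (w \<bullet> w)"
    and F: "0 \<le> F"
  shows "(\<Sum>l\<in>S. p l * (a \<bullet> col D l - a \<bullet> col D b)) \<le> sqrt 2 * sqrt (a \<bullet> a) * sqrt F"
proof -
  define w where "w = weights_minus_total n S b p"
  define g where "g c = a \<bullet> col D c" for c
  have w: "w \<in> carrier_vec n" by (simp add: w_def weights_minus_total_def)
  have "(\<Sum>l\<in>S. p l * (g l - g b)) = (\<Sum>l\<in>S. p l * g l) - sum p S * g b"
    by (simp add: right_diff_distrib sum_subtractf sum_distrib_right)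
  also have "\<dots> = (\<Sum>c<n. w $ c * g c)"
  proof -
    have "(\<Sum>c<n. w $ c * g c)
        = (\<Sum>c<n. if c \<in> S then p c * g c else 0) - (\<Sum>c<n. if c = b then sum p S * g b else 0)"
      unfolding sum_subtractf[symmetric]
      by (rule sum.cong) (auto simp: w_def weights_minus_total_def left_diff_distrib)
    also have "\<dots> = (\<Sum>l\<in>S. p l * g l) - sum p S * g b"
      using b S(1) sum.inter_restrict[where A = "{..<n}" and B = S and g = "\<lambda>c. p c * g c"]
      by (simp add: Int_absorb1)
    finally show ?thesis ..
  qed
  also have "\<dots> = a \<bullet> (D *\<^sub>v w)"
    unfolding g_def by (rule scalar_prod_mult_mat_vec_cols[OF a D w, symmetric])
  also have "\<dots> \<le> sqrt (a \<bullet> a) * sqrt ((D *\<^sub>v w) \<bullet> (D *\<^sub>v w))"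
    using D w by (intro scalar_prod_le_sqrt_mult_sqrt[OF a]) auto
  also have "\<dots> \<le> sqrt (a \<bullet> a) * sqrt (F * 2)"
  proof -
    have "F * (w \<bullet> w) \<le> F * 2"
      using weights_minus_total_scalar_prod_le[OF S b p] F by (simp add: w_def mult_left_mono)
    then have "(D *\<^sub>v w) \<bullet> (D *\<^sub>v w) \<le> F * 2" using bound[OF w] by linarith
    then show ?thesis
      using scalar_prod_self_nonneg[of a] by (intro mult_left_mono real_sqrt_le_mono) auto
  qed
  finally show ?thesis by (simp add: g_def real_sqrt_mult mult_ac)
qed

lemma has_real_derivative_ln_one_plus_sum_exp:
  fixes C \<Delta> :: "nat \<Rightarrow> real"
  shows "((\<lambda>t. ln (1 + (\<Sum>l\<in>S. exp (C l + t * \<Delta> l)))) has_real_derivative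
    (\<Sum>l\<in>S. \<Delta> l * exp (C l)) / (1 + (\<Sum>l\<in>S. exp (C l)))) (at 0)"
proof -
  have inner: "((\<lambda>t. 1 + (\<Sum>l\<in>S. exp (C l + t * \<Delta> l))) has_real_derivative
      (\<Sum>l\<in>S. \<Delta> l * exp (C l))) (at 0)"
    by (auto intro!: derivative_eq_intros simp: mult.commute)
  have pos: "0 < 1 + (\<Sum>l\<in>S. exp (C l + 0 * \<Delta> l))" by (simp add: add_pos_nonneg sum_nonneg)
  show ?thesis using DERIV_chain2[OF DERIV_ln_divide[OF pos] inner] by simp
qed

lemma multinomial_logistic_loss_dir_deriv_le:
  assumes X: "X \<in> carrier_mat m n" and D: "D \<in> carrier_mat m n"
    and b: "\<forall>j<q. b j < n" and a: "\<forall>j<q. a j \<in> carrier_vec m"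
    and bound: "\<And>w. w \<in> carrier_vec n \<Longrightarrow> (D *\<^sub>v w) \<bullet> (D *\<^sub>v w) \<le> F * (w \<bullet> w)"
    and F: "0 \<le> F"
  shows "\<exists>L. has_dir_deriv (multinomial_logistic_loss n q b a) X D L
    \<and> L \<le> sqrt 2 * (\<Sum>j<q. sqrt (a j \<bullet> a j)) * sqrt F"
proof -
  define S where "S j = {0..<n} - {b j}" for j
  define C where "C j l = a j \<bullet> col X l - a j \<bullet> col X (b j)" for j l
  define \<Delta> where "\<Delta> j l = a j \<bullet> col D l - a j \<bullet> col D (b j)" for j l
  define L where "L = (\<Sum>j<q. (\<Sum>l\<in>S j. \<Delta> j l * exp (C j l)) / (1 + (\<Sum>l\<in>S j. exp (C j l))))"
  have col_line: "a j \<bullet> col (X + t \<cdot>\<^sub>m D) l = a j \<bullet> col X l + t * (a j \<bullet> col D l)"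
    if "j < q" "l < n" for j l t
    using that X D a by (simp add: scalar_prod_add_distrib[of _ m])
  have "multinomial_logistic_loss n q b a (X + t \<cdot>\<^sub>m D)
      = (\<Sum>j<q. ln (1 + (\<Sum>l\<in>S j. exp (C j l + t * \<Delta> j l))))" for t
    unfolding multinomial_logistic_loss_def S_def
    using b by (intro sum.cong refl arg_cong[where f = ln] arg_cong[where f = "\<lambda>x. 1 + x"])
      (auto simp: col_line C_def \<Delta>_def algebra_simps)
  then have "has_dir_deriv (multinomial_logistic_loss n q b a) X D L"
    unfolding L_def using X D
    by (intro has_dir_deriv_of_real_derivative) (auto intro!: DERIV_sum has_real_derivative_ln_one_plus_sum_exp)
  moreover have "L \<le> (\<Sum>j<q. sqrt 2 * sqrt (a j \<bullet> a j) * sqrt F)"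
    unfolding L_def
  proof (rule sum_mono)
    fix j assume j: "j \<in> {..<q}"
    define E where "E = (\<Sum>l\<in>S j. exp (C j l))"
    have E: "0 \<le> E" by (simp add: E_def sum_nonneg)
    have "(\<Sum>l\<in>S j. \<Delta> j l * exp (C j l)) / (1 + E) = (\<Sum>l\<in>S j. exp (C j l) / (1 + E) * \<Delta> j l)"
      by (simp add: sum_divide_distrib mult_ac)
    also have "\<dots> \<le> sqrt 2 * sqrt (a j \<bullet> a j) * sqrt F"
      unfolding \<Delta>_def
    proof (rule weighted_column_difference_le[OF _ D _ _ _ _ _ bound F])
      show "(\<Sum>l\<in>S j. exp (C j l) / (1 + E)) \<le> 1"
        using E by (simp add: E_def[symmetric] flip: sum_divide_distrib)
    qed (use a b j E in \<open>auto simp: S_def\<close>)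
    finally show "(\<Sum>l\<in>S j. \<Delta> j l * exp (C j l)) / (1 + (\<Sum>l\<in>S j. exp (C j l)))
        \<le> sqrt 2 * sqrt (a j \<bullet> a j) * sqrt F" by (simp add: E_def)
  qed
  ultimately show ?thesis by (auto simp: sum_distrib_left sum_distrib_right mult_ac)
qed

theorem mainTheorem18:
  fixes m n q K :: nat and b :: "nat \<Rightarrow> nat" and a :: "nat \<Rightarrow> real vec"
    and \<gamma> :: real and Xs :: "real mat"
  assumes b: "\<forall>j<q. b j < n"
    and a: "\<forall>j<q. a j \<in> carrier_vec m"
    and K: "K < min m n"
    and gpos: "\<gamma> > 0"
    and stat: "d_stationary m n (objective n q b a K \<gamma>) Xs"
    and gbig: "\<gamma> > sqrt 2 * (\<Sum>j<q. sqrt (a j \<bullet> a j))"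
  shows "trunc_nuc K Xs = 0 \<and> vec_space.rank m Xs \<le> K"
proof -
  have "Xs \<in> carrier_mat m n" using stat by (simp add: d_stationary_def)
  then obtain V f where "gram_diagonalization Xs V f m n" using gram_diagonalization_exists by blast
  then interpret gram_diagonalization Xs V f m n .
  define c T where "c = sqrt 2 * (\<Sum>j<q. sqrt (a j \<bullet> a j))" and "T = trunc_nuc K Xs"
  obtain L where L: "has_dir_deriv (multinomial_logistic_loss n q b a) Xs (tail_direction K) L"
    and L_le: "L \<le> c * sqrt (f K)"
    using multinomial_logistic_loss_dir_deriv_le[OF carrier_X tail_direction_carrier b a
        scalar_prod_tail_direction_le eigenvalue_nonneg] K by (auto simp: c_def)
  have "has_dir_deriv (objective n q b a K \<gamma>) Xs (tail_direction K) (L + - (\<gamma> * T))"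
    unfolding objective_eq T_def by (rule has_dir_deriv_add[OF L has_dir_deriv_trunc_nuc_tail_direction])
  moreover obtain L' where "has_dir_deriv (objective n q b a K \<gamma>) Xs (tail_direction K) L'" "0 \<le> L'"
    using stat tail_direction_carrier by (auto simp: d_stationary_def)
  ultimately have "\<gamma> * T \<le> c * sqrt (f K)" using L_le has_dir_deriv_unique by fastforce
  also have "\<dots> \<le> c * T"
    using sqrt_eigenvalue_le_trunc_nuc[OF K] scalar_prod_self_nonneg
    by (intro mult_left_mono) (auto simp: c_def T_def intro!: mult_nonneg_nonneg sum_nonneg)
  finally have T: "T = 0" using gbig trunc_nuc_nonneg[of K] by (simp add: c_def T_def mult_le_cancel_right)
  then have "f K = 0"
    using sqrt_eigenvalue_le_trunc_nuc[OF K] eigenvalue_nonneg[of K] K by (simp add: T_def)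
  then show ?thesis using rank_le_if_eigenvalue_0 K T by (simp add: T_def)
qed

end
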